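(* Let $G$ be a connected graph with at least one edge, and let $l(G)=\min\{|L(uv)|: uv\in E(G)\}$. Then $l(G)=|V(G)|-1$ if and only if $G$ is isomorphic to a cycle of odd length.
   Context: All graphs are finite and simple; $d$ is the shortest-path distance. For an edge $uv$, $L(uv)=\{x\in V(G): d(u,x)\neq d(v,x)\}$. *)

theory Defs
  imports Main
begin

definition simple_graph :: "'a set \<Rightarrow> ('a \<Rightarrow> 'a \<Rightarrow> bool) \<Rightarrow> bool" where
  "simple_graph V E \<longleftrightarrow> finite V \<and> (\<forall>u v. E u v \<longrightarrow> u \<in> V \<and> v \<in> V)
     \<and> (\<forall>u v. E u v \<longrightarrow> E v u) \<and> (\<forall>u. \<not> E u u)"

definition is_walk :: "'a set \<Rightarrow> ('a \<Rightarrow> 'a \<Rightarrow> bool) \<Rightarrow> 'a list \<Rightarrow> bool" where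
  "is_walk V E xs \<longleftrightarrow> xs \<noteq> [] \<and> set xs \<subseteq> V \<and>
     (\<forall>i. Suc i < length xs \<longrightarrow> E (xs ! i) (xs ! Suc i))"

definition walk_between :: "'a set \<Rightarrow> ('a \<Rightarrow> 'a \<Rightarrow> bool) \<Rightarrow> 'a \<Rightarrow> 'a \<Rightarrow> nat \<Rightarrow> bool" where
  "walk_between V E u v n \<longleftrightarrow>
     (\<exists>xs. is_walk V E xs \<and> hd xs = u \<and> last xs = v \<and> length xs = Suc n)"

definition connected_graph :: "'a set \<Rightarrow> ('a \<Rightarrow> 'a \<Rightarrow> bool) \<Rightarrow> bool" where
  "connected_graph V E \<longleftrightarrow> (\<forall>u\<in>V. \<forall>v\<in>V. \<exists>n. walk_between V E u v n)"

text \<open>Shortest-path distance (meaningful for u, v in the same component).\<close>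
definition dist :: "'a set \<Rightarrow> ('a \<Rightarrow> 'a \<Rightarrow> bool) \<Rightarrow> 'a \<Rightarrow> 'a \<Rightarrow> nat" where
  "dist V E u v = (LEAST n. walk_between V E u v n)"

definition Lset :: "'a set \<Rightarrow> ('a \<Rightarrow> 'a \<Rightarrow> bool) \<Rightarrow> 'a \<Rightarrow> 'a \<Rightarrow> 'a set" where
  "Lset V E u v = {x \<in> V. dist V E u x \<noteq> dist V E v x}"

definition lG :: "'a set \<Rightarrow> ('a \<Rightarrow> 'a \<Rightarrow> bool) \<Rightarrow> nat" where
  "lG V E = Min {card (Lset V E u v) | u v. E u v}"

definition iso_to_cycle :: "'a set \<Rightarrow> ('a \<Rightarrow> 'a \<Rightarrow> bool) \<Rightarrow> nat \<Rightarrow> bool" where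
  "iso_to_cycle V E n \<longleftrightarrow> n \<ge> 3 \<and> (\<exists>f. bij_betw f {0..<n} V \<and>
     (\<forall>i<n. \<forall>j<n. E (f i) (f j) \<longleftrightarrow> (j = (i + 1) mod n \<or> i = (j + 1) mod n)))"

end

theory Submission
  imports Defs
begin

text \<open>
  The set \<open>L(uv)\<close> misses exactly the vertices equidistant from \<open>u\<close> and \<open>v\<close>. So
  \<open>l(G) = |V| - 1\<close> says that every edge has at most one equidistant vertex and some edge
  \<open>uv\<close> has one, say \<open>x\<close>. Then \<open>u \<leadsto> x \<leadsto> v \<rightarrow> u\<close> is a closed walk of odd length, and a
  shortest odd closed walk \<open>C\<close> is isometric, its distances being those of a cycle. For any
  vertex \<open>w\<close>, the distance to \<open>w\<close> cannot change parity along each of the odd number of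
  edges of \<open>C\<close>, so some edge of \<open>C\<close> is equidistant from \<open>w\<close>; that edge is also equidistant
  from the opposite vertex of \<open>C\<close>, hence \<open>w\<close> lies on \<open>C\<close> and \<open>G = C\<close>. Conversely, in an odd
  cycle the only vertex equidistant from an edge is the opposite one.
\<close>

text \<open>Walks are indexed by \<open>{0..m}\<close> as functions, which avoids list bookkeeping.\<close>

definition walk :: "('a \<Rightarrow> 'a \<Rightarrow> bool) \<Rightarrow> (nat \<Rightarrow> 'a) \<Rightarrow> nat \<Rightarrow> 'a \<Rightarrow> 'a \<Rightarrow> bool" where
  "walk E p m a b \<longleftrightarrow> p 0 = a \<and> p m = b \<and> (\<forall>i<m. E (p i) (p (Suc i)))"

lemma walk_edge: "E a b \<Longrightarrow> walk E (\<lambda>t. if t = 0 then a else b) 1 a b"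
  by (simp add: walk_def)

lemma walk_append:
  assumes "walk E p m a b" "walk E q n b c"
  shows "\<exists>r. walk E r (m + n) a c"
proof -
  let ?r = "\<lambda>t. if t \<le> m then p t else q (t - m)"
  have "walk E ?r (m + n) a c" unfolding walk_def
  proof (intro conjI allI impI)
    show "?r 0 = a" "?r (m + n) = c" using assms by (auto simp: walk_def)
    fix i assume i: "i < m + n"
    show "E (?r i) (?r (Suc i))"
    proof (cases "i < m")
      case True then show ?thesis using assms by (auto simp: walk_def)
    next
      case False
      then have "i - m < n" "Suc i - m = Suc (i - m)" "?r i = q (i - m)"
        using i assms by (auto simp: walk_def)
      then show ?thesis using assms False by (auto simp: walk_def)
    qed
  qed
  then show ?thesis by blast
qed

lemma walk_subwalk:
  "walk E p m a b \<Longrightarrow> i \<le> j \<Longrightarrow> j \<le> m \<Longrightarrow> walk E (\<lambda>t. p (i + t)) (j - i) (p i) (p j)"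
  unfolding walk_def by auto

lemma walk_reverse:
  assumes "walk E p m a b" "\<And>u v. E u v \<Longrightarrow> E v u"
  shows "walk E (\<lambda>t. p (m - t)) m b a"
  unfolding walk_def
proof (intro conjI allI impI)
  fix i assume "i < m"
  then have "m - Suc i < m" "Suc (m - Suc i) = m - i" by auto
  then show "E (p (m - i)) (p (m - Suc i))" using assms unfolding walk_def by metis
qed (use assms in \<open>auto simp: walk_def\<close>)

lemma closed_walk_complementary_arc:
  assumes "walk E c L z z" "i \<le> j" "j \<le> L"
  shows "\<exists>r. walk E r (L - (j - i)) (c j) (c i)"
proof -
  have "walk E (\<lambda>t. c (j + t)) (L - j) (c j) z" "walk E c i z (c i)"
    using assms by (auto simp: walk_def)
  from walk_append[OF this] show ?thesis using assms by (simp add: add.commute)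
qed

definition cycle_dist :: "nat \<Rightarrow> nat \<Rightarrow> nat \<Rightarrow> nat" where
  "cycle_dist n i j = (let t = (if i \<le> j then j - i else i - j) in min t (n - t))"

text \<open>For odd \<open>n\<close>, the vertex of the \<open>n\<close>-cycle opposite the edge \<open>{i, i + 1}\<close>.\<close>

definition antipode :: "nat \<Rightarrow> nat \<Rightarrow> nat" where
  "antipode n i = (i + Suc (n div 2)) mod n"

lemma cycle_dist_commute: "cycle_dist n i j = cycle_dist n j i"
  unfolding cycle_dist_def Let_def by auto

lemma cycle_dist_eq_0_iff: "i < n \<Longrightarrow> j < n \<Longrightarrow> cycle_dist n i j = 0 \<longleftrightarrow> i = j"
  unfolding cycle_dist_def Let_def min_def by auto

lemma mod_Suc_less: "i < (n::nat) \<Longrightarrow> (i + 1) mod n = (if i + 1 = n then 0 else i + 1)"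
  by auto

lemma cycle_dist_eq_1_iff:
  assumes "3 \<le> n" "i < n" "j < n"
  shows "cycle_dist n i j = 1 \<longleftrightarrow> j = (i + 1) mod n \<or> i = (j + 1) mod n"
  using assms unfolding cycle_dist_def Let_def min_def mod_Suc_less[OF assms(2)]
    mod_Suc_less[OF assms(3)]
  by (auto split: if_splits)

lemma cycle_dist_adjacent_le:
  assumes "i < n" "j < n" "j' < n" "j' = (j + 1) mod n \<or> j = (j' + 1) mod n"
  shows "cycle_dist n i j' \<le> cycle_dist n i j + 1"
  using assms unfolding cycle_dist_def Let_def min_def mod_Suc_less[OF assms(2)]
    mod_Suc_less[OF assms(3)]
  by (auto split: if_splits)

lemma antipode_less: "0 < n \<Longrightarrow> antipode n i < n"
  unfolding antipode_def by simp

lemma cycle_dist_eq_Suc_iff_antipode: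
  assumes "odd n" "i < n" "j < n"
  shows "cycle_dist n i j = cycle_dist n ((i + 1) mod n) j \<longleftrightarrow> j = antipode n i"
proof -
  obtain k where n: "n = 2 * k + 1" using assms(1) oddE by blast
  have "antipode n i = (if i + k + 1 < n then i + k + 1 else i - k)"
    using assms(2) unfolding antipode_def n by (auto simp: mod_if)
  then show ?thesis
    using assms(2,3) n unfolding cycle_dist_def Let_def mod_Suc_less[OF assms(2)]
    by (cases "i + 1 = n"; cases "j \<le> i"; auto simp: min_def split: if_splits)
qed

lemma Lset_commute: "Lset V E u v = Lset V E v u"
  unfolding Lset_def by auto

lemma finite_card_Lset_values: "finite V \<Longrightarrow> finite {card (Lset V E u v) | u v. E u v}"
proof (rule finite_subset)
  assume "finite V"
  then show "{card (Lset V E u v) | u v. E u v} \<subseteq> {..card V}"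
    by (auto simp: Lset_def intro: card_mono)
qed simp

lemma lG_le_card_Lset: "finite V \<Longrightarrow> E u v \<Longrightarrow> lG V E \<le> card (Lset V E u v)"
  unfolding lG_def by (rule Min_le) (auto simp: finite_card_Lset_values)

lemma lG_attained:
  assumes "finite V" "E u v"
  shows "\<exists>a b. E a b \<and> card (Lset V E a b) = lG V E"
proof -
  have "lG V E \<in> {card (Lset V E u v) | u v. E u v}"
    unfolding lG_def using assms by (intro Min_in finite_card_Lset_values) auto
  then show ?thesis unfolding mem_Collect_eq by metis
qed

lemma lG_eq_if_card_Lset_const:
  assumes "E u v" "\<And>a b. E a b \<Longrightarrow> card (Lset V E a b) = m"
  shows "lG V E = m"
proof -
  have "{card (Lset V E a b) | a b. E a b} = {m}" using assms by blast
  then show ?thesis unfolding lG_def by simp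
qed

locale connected_simple_graph =
  fixes V :: "'a set" and E :: "'a \<Rightarrow> 'a \<Rightarrow> bool"
  assumes simple: "simple_graph V E" and connected: "connected_graph V E"
begin

abbreviation d where "d \<equiv> dist V E"

lemma edge_in_V: "E u v \<Longrightarrow> u \<in> V \<and> v \<in> V"
  using simple unfolding simple_graph_def by blast

lemma edge_commute: "E u v \<Longrightarrow> E v u"
  using simple unfolding simple_graph_def by blast

lemma no_loop: "\<not> E u u"
  using simple unfolding simple_graph_def by blast

lemma finite_V: "finite V"
  using simple unfolding simple_graph_def by blast

lemma walk_in_V: "walk E p m a b \<Longrightarrow> a \<in> V \<Longrightarrow> t \<le> m \<Longrightarrow> p t \<in> V"
proof (cases t)
  case (Suc s)
  assume "walk E p m a b" "t \<le> m"
  then have "E (p s) (p t)" using Suc unfolding walk_def by auto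
  then show ?thesis using edge_in_V by blast
qed (auto simp: walk_def)

lemma walk_between_iff: "walk_between V E a b m \<longleftrightarrow> a \<in> V \<and> (\<exists>p. walk E p m a b)"
proof
  assume "walk_between V E a b m"
  then obtain xs where xs: "is_walk V E xs" "hd xs = a" "last xs = b" "length xs = Suc m"
    unfolding walk_between_def by blast
  have "a \<in> V" using xs by (metis hd_in_set is_walk_def subsetD)
  moreover have "walk E ((!) xs) m a b" using xs unfolding walk_def is_walk_def
    by (auto simp: hd_conv_nth last_conv_nth)
  ultimately show "a \<in> V \<and> (\<exists>p. walk E p m a b)" by blast
next
  assume "a \<in> V \<and> (\<exists>p. walk E p m a b)"
  then obtain p where a: "a \<in> V" and p: "walk E p m a b" by blast
  let ?xs = "map p [0..<Suc m]"
  have "is_walk V E ?xs" unfolding is_walk_def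
  proof (intro conjI allI impI)
    show "set ?xs \<subseteq> V" using walk_in_V[OF p a] by auto
    fix i assume "Suc i < length ?xs"
    then show "E (?xs ! i) (?xs ! Suc i)" using p unfolding walk_def
      by (simp del: upt_Suc add: nth_map_upt)
  qed simp
  moreover have "hd ?xs = a" using p by (simp del: upt_Suc add: walk_def hd_map upt_conv_Cons)
  moreover have "last ?xs = b" using p by (simp add: walk_def)
  ultimately show "walk_between V E a b m" unfolding walk_between_def
    by (metis length_map length_upt minus_nat.diff_0)
qed

lemma shortest_walk: assumes "a \<in> V" "b \<in> V" shows "\<exists>p. walk E p (d a b) a b"
proof -
  have "\<exists>n. walk_between V E a b n" using connected assms unfolding connected_graph_def by blast
  then have "walk_between V E a b (d a b)" unfolding dist_def by (rule LeastI_ex)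
  then show ?thesis using walk_between_iff by blast
qed

lemma dist_le_walk: "a \<in> V \<Longrightarrow> walk E p m a b \<Longrightarrow> d a b \<le> m"
  unfolding dist_def by (rule Least_le) (use walk_between_iff in blast)

lemma dist_self: "a \<in> V \<Longrightarrow> d a a = 0"
  using dist_le_walk[of a "\<lambda>_. a" 0 a] by (simp add: walk_def)

lemma dist_eq_0_imp_eq: "a \<in> V \<Longrightarrow> b \<in> V \<Longrightarrow> d a b = 0 \<Longrightarrow> a = b"
  using shortest_walk[of a b] by (auto simp: walk_def)

lemma dist_commute: assumes "a \<in> V" "b \<in> V" shows "d a b = d b a"
proof -
  have "d b a \<le> d a b" if ab: "a \<in> V" "b \<in> V" for a b
  proof -
    obtain p where "walk E p (d a b) a b" using shortest_walk[OF ab] by blast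
    from walk_reverse[OF this edge_commute] show ?thesis using dist_le_walk ab by blast
  qed
  then show ?thesis using assms by (meson le_antisym)
qed

lemma edge_iff_dist_eq_1: assumes "a \<in> V" "b \<in> V" shows "E a b \<longleftrightarrow> d a b = 1"
proof
  assume e: "E a b"
  have "d a b \<le> 1" using dist_le_walk[OF assms(1) walk_edge[of E, OF e]] .
  moreover have "d a b \<noteq> 0" using dist_eq_0_imp_eq assms e no_loop by blast
  ultimately show "d a b = 1" by simp
next
  assume "d a b = 1"
  then obtain p where "walk E p 1 a b" using shortest_walk assms by fastforce
  then show "E a b" unfolding walk_def by auto
qed

lemma dist_le_edge_dist: assumes "E a b" "x \<in> V" shows "d a x \<le> d b x + 1"
proof -
  obtain p where "walk E p (d b x) b x" using shortest_walk edge_in_V assms by blast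
  from walk_append[OF walk_edge[of E, OF assms(1)] this] obtain r where "walk E r (1 + d b x) a x"
    by blast
  then show ?thesis using dist_le_walk edge_in_V assms by fastforce
qed

lemma closed_walk_dist_le_cycle_dist:
  assumes c: "walk E c L z z" and z: "z \<in> V" and "i \<le> L" "j \<le> L"
  shows "d (c i) (c j) \<le> cycle_dist L i j"
proof -
  have "i \<le> L \<longrightarrow> j \<le> L \<longrightarrow> d (c i) (c j) \<le> cycle_dist L i j"
  proof (rule linorder_wlog[where P = "\<lambda>i j. i \<le> L \<longrightarrow> j \<le> L \<longrightarrow> d (c i) (c j) \<le> cycle_dist L i j"])
    fix i j :: nat assume ij: "i \<le> j"
    show "i \<le> L \<longrightarrow> j \<le> L \<longrightarrow> d (c i) (c j) \<le> cycle_dist L i j"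
    proof (intro impI)
      assume "i \<le> L" "j \<le> L"
      then have V: "c i \<in> V" "c j \<in> V" using walk_in_V[OF c z] by auto
      have "d (c i) (c j) \<le> j - i" using dist_le_walk[OF V(1) walk_subwalk[OF c ij \<open>j \<le> L\<close>]] .
      moreover obtain r where "walk E r (L - (j - i)) (c j) (c i)"
        using closed_walk_complementary_arc[OF c ij \<open>j \<le> L\<close>] by blast
      then have "d (c j) (c i) \<le> L - (j - i)" using dist_le_walk V(2) by blast
      then have "d (c i) (c j) \<le> L - (j - i)" using dist_commute[OF V] by simp
      ultimately show "d (c i) (c j) \<le> cycle_dist L i j"
        unfolding cycle_dist_def Let_def using ij by simp
    qed
  next
    fix i j :: nat assume ji: "j \<le> L \<longrightarrow> i \<le> L \<longrightarrow> d (c j) (c i) \<le> cycle_dist L j i"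
    show "i \<le> L \<longrightarrow> j \<le> L \<longrightarrow> d (c i) (c j) \<le> cycle_dist L i j"
    proof (intro impI)
      assume "i \<le> L" "j \<le> L"
      then have "d (c i) (c j) = d (c j) (c i)" using walk_in_V[OF c z] dist_commute by blast
      then show "d (c i) (c j) \<le> cycle_dist L i j"
        using ji \<open>i \<le> L\<close> \<open>j \<le> L\<close> by (simp add: cycle_dist_commute)
    qed
  qed
  with assms show ?thesis by blast
qed

lemma odd_closed_walk_through_edge:
  assumes e: "E a b" and x: "x \<in> V" "d a x = d b x"
  shows "\<exists>c. walk E c (2 * d a x + 1) a a"
proof -
  have ab: "a \<in> V" "b \<in> V" using edge_in_V e by auto
  obtain p where p: "walk E p (d a x) a x" using shortest_walk ab(1) x(1) by blast
  obtain q where "walk E q (d a x) b x" using shortest_walk ab(2) x by metis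
  from walk_append[OF p walk_reverse[OF this edge_commute]]
  obtain r where "walk E r (d a x + d a x) a b" by blast
  from walk_append[OF this walk_edge[of E, OF edge_commute[OF e]]] show ?thesis
    by (simp add: mult_2)
qed

text \<open>A shorter closed walk through a chord of \<open>C\<close> would be odd on one of the two sides.\<close>

lemma shortest_odd_closed_walk_isometric:
  assumes c: "walk E c L z z" and z: "z \<in> V" and "odd L"
    and shortest: "\<And>c' z' M. walk E c' M z' z' \<Longrightarrow> z' \<in> V \<Longrightarrow> odd M \<Longrightarrow> L \<le> M"
    and "i \<le> L" "j \<le> L"
  shows "d (c i) (c j) = cycle_dist L i j"
proof -
  have "i \<le> L \<longrightarrow> j \<le> L \<longrightarrow> cycle_dist L i j \<le> d (c i) (c j)"
  proof (rule linorder_wlog[where P = "\<lambda>i j. i \<le> L \<longrightarrow> j \<le> L \<longrightarrow> cycle_dist L i j \<le> d (c i) (c j)"])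
    fix i j :: nat assume ij: "i \<le> j"
    show "i \<le> L \<longrightarrow> j \<le> L \<longrightarrow> cycle_dist L i j \<le> d (c i) (c j)"
    proof (intro impI)
      assume "i \<le> L" "j \<le> L"
      then have V: "c i \<in> V" "c j \<in> V" using walk_in_V[OF c z] by auto
      define D where "D = d (c i) (c j)"
      obtain w where w: "walk E w D (c i) (c j)" using shortest_walk[OF V] D_def by blast
      obtain r1 where r1: "walk E r1 (j - i + D) (c i) (c i)"
        using walk_append[OF walk_subwalk[OF c ij \<open>j \<le> L\<close>] walk_reverse[OF w edge_commute]]
        by blast
      obtain arc where "walk E arc (L - (j - i)) (c j) (c i)"
        using closed_walk_complementary_arc[OF c ij \<open>j \<le> L\<close>] by blast
      from walk_append[OF this w]
      obtain r2 where r2: "walk E r2 (L - (j - i) + D) (c j) (c j)" by blast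
      have "odd (j - i + D) \<or> odd (L - (j - i) + D)"
        using \<open>odd L\<close> \<open>j \<le> L\<close> ij by presburger
      then have "L \<le> j - i + D \<or> L \<le> L - (j - i) + D" using shortest r1 r2 V by blast
      then show "cycle_dist L i j \<le> D" unfolding cycle_dist_def Let_def using ij by auto
    qed
  next
    fix i j :: nat assume ji: "j \<le> L \<longrightarrow> i \<le> L \<longrightarrow> cycle_dist L j i \<le> d (c j) (c i)"
    show "i \<le> L \<longrightarrow> j \<le> L \<longrightarrow> cycle_dist L i j \<le> d (c i) (c j)"
    proof (intro impI)
      assume "i \<le> L" "j \<le> L"
      then have "d (c i) (c j) = d (c j) (c i)" using walk_in_V[OF c z] dist_commute by blast
      then show "cycle_dist L i j \<le> d (c i) (c j)"
        using ji \<open>i \<le> L\<close> \<open>j \<le> L\<close> by (simp add: cycle_dist_commute)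
    qed
  qed
  with closed_walk_dist_le_cycle_dist[OF c z] assms show ?thesis by (meson le_antisym)
qed

lemma odd_closed_walk_equidistant_edge:
  assumes c: "walk E c L z z" and "odd L" and w: "w \<in> V"
  shows "\<exists>t<L. d (c t) w = d (c (Suc t)) w"
proof (rule ccontr)
  assume ne: "\<not> ?thesis"
  have "even (d (c t) w + t) \<longleftrightarrow> even (d (c 0) w)" if "t \<le> L" for t
    using that
  proof (induction t)
    case (Suc t)
    have e: "E (c t) (c (Suc t))" using c Suc.prems by (simp add: walk_def)
    have "d (c t) w \<noteq> d (c (Suc t)) w" using ne Suc.prems by auto
    then have "d (c (Suc t)) w = d (c t) w + 1 \<or> d (c t) w = d (c (Suc t)) w + 1"
      using dist_le_edge_dist[OF e w] dist_le_edge_dist[OF edge_commute[OF e] w] by linarith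
    then have "even (d (c (Suc t)) w + Suc t) \<longleftrightarrow> even (d (c t) w + t)" by presburger
    then show ?case using Suc by simp
  qed simp
  from this[of L] show False using c \<open>odd L\<close> by (simp add: walk_def)
qed

lemma isometric_closed_walk_antipode_equidistant:
  assumes c: "walk E c L z z" and "odd L"
    and iso: "\<And>i j. i \<le> L \<Longrightarrow> j \<le> L \<Longrightarrow> d (c i) (c j) = cycle_dist L i j"
    and t: "t < L"
  shows "d (c t) (c (antipode L t)) = d (c (Suc t)) (c (antipode L t))"
proof -
  let ?a = "antipode L t"
  have a: "?a < L" using antipode_less t by simp
  have "c (Suc t) = c ((t + 1) mod L)" using c t by (cases "Suc t = L") (auto simp: walk_def)
  moreover have "cycle_dist L t ?a = cycle_dist L ((t + 1) mod L) ?a"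
    using cycle_dist_eq_Suc_iff_antipode[OF \<open>odd L\<close> t a] by simp
  moreover have "(t + 1) mod L \<le> L" using t by simp
  ultimately show ?thesis using iso[of t ?a] iso[of "(t + 1) mod L" ?a] a t by simp
qed

lemma isometric_odd_closed_walk_covers:
  assumes unique: "\<And>a b x y. E a b \<Longrightarrow> x \<in> V \<Longrightarrow> y \<in> V \<Longrightarrow>
      d a x = d b x \<Longrightarrow> d a y = d b y \<Longrightarrow> x = y"
    and c: "walk E c L z z" and z: "z \<in> V" and "odd L"
    and iso: "\<And>i j. i \<le> L \<Longrightarrow> j \<le> L \<Longrightarrow> d (c i) (c j) = cycle_dist L i j"
    and w: "w \<in> V"
  shows "\<exists>t<L. c t = w"
proof -
  obtain t where t: "t < L" "d (c t) w = d (c (Suc t)) w"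
    using odd_closed_walk_equidistant_edge[OF c \<open>odd L\<close> w] by blast
  let ?a = "antipode L t"
  have a: "?a < L" using antipode_less t by simp
  have e: "E (c t) (c (Suc t))" using c t by (simp add: walk_def)
  have "c ?a \<in> V" using walk_in_V[OF c z] a by simp
  then have "w = c ?a"
    using unique[OF e w] t isometric_closed_walk_antipode_equidistant[OF c \<open>odd L\<close> iso t(1)]
    by blast
  with a show ?thesis by blast
qed

lemma iso_to_cycle_if_isometric_closed_walk:
  assumes c: "walk E c L z z" and z: "z \<in> V" and "3 \<le> L"
    and iso: "\<And>i j. i \<le> L \<Longrightarrow> j \<le> L \<Longrightarrow> d (c i) (c j) = cycle_dist L i j"
    and covers: "\<And>w. w \<in> V \<Longrightarrow> \<exists>t<L. c t = w"
  shows "iso_to_cycle V E L"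
proof -
  have V: "c i \<in> V" if "i < L" for i using walk_in_V[OF c z] that by simp
  have "inj_on c {0..<L}"
  proof (rule inj_onI)
    fix i j assume ij: "i \<in> {0..<L}" "j \<in> {0..<L}" and "c i = c j"
    then have "cycle_dist L i j = 0" using iso[of i j] dist_self V by simp
    then show "i = j" using cycle_dist_eq_0_iff ij by simp
  qed
  moreover have "c ` {0..<L} = V" using covers V by force
  ultimately have "bij_betw c {0..<L} V" unfolding bij_betw_def by blast
  moreover have "E (c i) (c j) \<longleftrightarrow> j = (i + 1) mod L \<or> i = (j + 1) mod L"
    if "i < L" "j < L" for i j
    using edge_iff_dist_eq_1[OF V V] iso[of i j] cycle_dist_eq_1_iff[OF \<open>3 \<le> L\<close>] that by simp
  ultimately show ?thesis unfolding iso_to_cycle_def using \<open>3 \<le> L\<close> by blast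
qed

lemma odd_cycle_if_unique_equidistant:
  assumes unique: "\<And>a b x y. E a b \<Longrightarrow> x \<in> V \<Longrightarrow> y \<in> V \<Longrightarrow>
      d a x = d b x \<Longrightarrow> d a y = d b y \<Longrightarrow> x = y"
    and e: "E a b" and x: "x \<in> V" "d a x = d b x"
  shows "\<exists>n. odd n \<and> iso_to_cycle V E n"
proof -
  define P where "P M \<longleftrightarrow> odd M \<and> (\<exists>c z. z \<in> V \<and> walk E c M z z)" for M
  have "P (2 * d a x + 1)"
    unfolding P_def using odd_closed_walk_through_edge[OF e x] edge_in_V[OF e] by auto
  then have "P (LEAST M. P M)" by (rule LeastI)
  then obtain L c z where L: "L = (LEAST M. P M)" "odd L" and z: "z \<in> V" and c: "walk E c L z z"
    unfolding P_def by blast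
  have shortest: "\<And>c' z' M. walk E c' M z' z' \<Longrightarrow> z' \<in> V \<Longrightarrow> odd M \<Longrightarrow> L \<le> M"
    unfolding L(1) by (intro Least_le) (auto simp: P_def)
  have iso: "d (c i) (c j) = cycle_dist L i j" if "i \<le> L" "j \<le> L" for i j
    using c z \<open>odd L\<close> shortest that by (rule shortest_odd_closed_walk_isometric)
  have "L \<noteq> 1" using c no_loop by (auto simp: walk_def)
  then have "3 \<le> L" using \<open>odd L\<close> by presburger
  have covers: "\<exists>t<L. c t = w" if "w \<in> V" for w
    using unique c z \<open>odd L\<close> iso that by (rule isometric_odd_closed_walk_covers)
  have "iso_to_cycle V E L"
    using c z \<open>3 \<le> L\<close> iso covers by (rule iso_to_cycle_if_isometric_closed_walk)
  with \<open>odd L\<close> show ?thesis by blast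
qed

lemma card_V_ge_2: "E u v \<Longrightarrow> 2 \<le> card V"
proof -
  assume e: "E u v"
  then have "card {u, v} = 2" using no_loop by (metis card_2_iff)
  moreover have "{u, v} \<subseteq> V" using edge_in_V[OF e] by simp
  ultimately show ?thesis using card_mono finite_V by metis
qed

lemma equidistant_vertex_unique:
  assumes lG: "lG V E = card V - 1"
    and "E a b" "x \<in> V" "y \<in> V" "d a x = d b x" "d a y = d b y"
  shows "x = y"
proof (rule ccontr)
  assume "x \<noteq> y"
  have "Lset V E a b \<subseteq> V - {x, y}" using assms unfolding Lset_def by auto
  then have "card (Lset V E a b) \<le> card (V - {x, y})" using finite_V by (intro card_mono) auto
  also have "\<dots> = card V - 2" using assms \<open>x \<noteq> y\<close> by (simp add: card_Diff_subset)
  finally have "card (Lset V E a b) \<le> card V - 2" .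
  moreover have "card V - 1 \<le> card (Lset V E a b)"
    using lG_le_card_Lset[of V E, OF finite_V \<open>E a b\<close>] lG by simp
  ultimately show False using card_V_ge_2[OF \<open>E a b\<close>] by linarith
qed

lemma equidistant_vertex_exists:
  assumes lG: "lG V E = card V - 1" and "E u v"
  shows "\<exists>a b x. E a b \<and> x \<in> V \<and> d a x = d b x"
proof -
  obtain a b where ab: "E a b" "card (Lset V E a b) = card V - 1"
    using lG_attained[of V E, OF finite_V \<open>E u v\<close>] lG by auto
  then have "Lset V E a b \<noteq> V" using card_V_ge_2[OF ab(1)] by auto
  then obtain x where "x \<in> V" "d a x = d b x" unfolding Lset_def by auto
  with ab show ?thesis by blast
qed

lemma cycle_dist_le_dist_if_cycle:
  assumes f: "bij_betw f {0..<n} V"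
    and adj: "\<And>i j. i < n \<Longrightarrow> j < n \<Longrightarrow> E (f i) (f j) \<longleftrightarrow> j = (i + 1) mod n \<or> i = (j + 1) mod n"
    and i: "i < n" and j: "j < n"
  shows "cycle_dist n i j \<le> d (f i) (f j)"
proof -
  let ?g = "inv_into {0..<n} f"
  have g: "?g v < n" "f (?g v) = v" if "v \<in> V" for v
    using f that by (auto simp: bij_betw_def inv_into_into f_inv_into_f)
  have g_f: "?g (f k) = k" if "k < n" for k
    using f that by (simp add: bij_betw_def inv_into_f_f)
  have fV: "f i \<in> V" "f j \<in> V" using f i j bij_betwE by fastforce+
  obtain p where p: "walk E p (d (f i) (f j)) (f i) (f j)" using shortest_walk[OF fV] by blast
  have "cycle_dist n i (?g (p t)) \<le> t" if "t \<le> d (f i) (f j)" for t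
    using that
  proof (induction t)
    case 0
    then show ?case using p g_f i by (simp add: walk_def cycle_dist_def)
  next
    case (Suc t)
    have e: "E (p t) (p (Suc t))" using p Suc.prems by (simp add: walk_def)
    then have V: "p t \<in> V" "p (Suc t) \<in> V" using edge_in_V by auto
    have "?g (p (Suc t)) = (?g (p t) + 1) mod n \<or> ?g (p t) = (?g (p (Suc t)) + 1) mod n"
      using adj[of "?g (p t)" "?g (p (Suc t))"] g V e by simp
    then have "cycle_dist n i (?g (p (Suc t))) \<le> cycle_dist n i (?g (p t)) + 1"
      using cycle_dist_adjacent_le i g V by blast
    then show ?case using Suc by simp
  qed
  from this[of "d (f i) (f j)"] show ?thesis using p g_f j by (simp add: walk_def)
qed

lemma dist_eq_cycle_dist_if_cycle:
  assumes f: "bij_betw f {0..<n} V"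
    and adj: "\<And>i j. i < n \<Longrightarrow> j < n \<Longrightarrow> E (f i) (f j) \<longleftrightarrow> j = (i + 1) mod n \<or> i = (j + 1) mod n"
    and "i < n" "j < n"
  shows "d (f i) (f j) = cycle_dist n i j"
proof -
  have "f 0 \<in> V" using f assms(3) bij_betwE by fastforce
  moreover have "walk E (\<lambda>t. f (t mod n)) n (f 0) (f 0)" unfolding walk_def
  proof (intro conjI allI impI)
    fix t assume "t < n"
    then show "E (f (t mod n)) (f (Suc t mod n))" using adj[of t "(t + 1) mod n"] by simp
  qed simp_all
  ultimately have "d (f i) (f j) \<le> cycle_dist n i j"
    using closed_walk_dist_le_cycle_dist[of "\<lambda>t. f (t mod n)" n "f 0" i j] assms by simp
  with cycle_dist_le_dist_if_cycle[OF f adj assms(3,4)] show ?thesis by linarith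
qed

lemma Lset_odd_cycle_edge:
  assumes "odd n" and f: "bij_betw f {0..<n} V"
    and dist: "\<And>i j. i < n \<Longrightarrow> j < n \<Longrightarrow> d (f i) (f j) = cycle_dist n i j"
    and a: "a < n"
  shows "Lset V E (f a) (f ((a + 1) mod n)) = V - {f (antipode n a)}"
proof (rule set_eqI)
  fix x
  show "x \<in> Lset V E (f a) (f ((a + 1) mod n)) \<longleftrightarrow> x \<in> V - {f (antipode n a)}"
  proof (cases "x \<in> V")
    case True
    then obtain j where j: "j < n" "x = f j" using f by (auto simp: bij_betw_def)
    have b: "(a + 1) mod n < n" "antipode n a < n" using a antipode_less by auto
    have "x \<in> Lset V E (f a) (f ((a + 1) mod n)) \<longleftrightarrow>
        cycle_dist n a j \<noteq> cycle_dist n ((a + 1) mod n) j"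
      unfolding Lset_def using True j dist a b by simp
    also have "\<dots> \<longleftrightarrow> j \<noteq> antipode n a"
      using cycle_dist_eq_Suc_iff_antipode[OF \<open>odd n\<close> a j(1)] by simp
    also have "\<dots> \<longleftrightarrow> x \<noteq> f (antipode n a)"
      using f j b unfolding bij_betw_def inj_on_def by auto
    finally show ?thesis using True by blast
  qed (simp add: Lset_def)
qed

lemma lG_odd_cycle:
  assumes "odd n" "iso_to_cycle V E n"
  shows "lG V E = card V - 1"
proof -
  obtain f where "3 \<le> n" and f: "bij_betw f {0..<n} V"
    and adj: "\<And>i j. i < n \<Longrightarrow> j < n \<Longrightarrow> E (f i) (f j) \<longleftrightarrow> j = (i + 1) mod n \<or> i = (j + 1) mod n"
    using assms(2) unfolding iso_to_cycle_def by blast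
  have card_V: "card V = n" using bij_betw_same_card[OF f] by simp
  have fV: "f i \<in> V" if "i < n" for i using f that bij_betwE by fastforce
  have edge_card: "card (Lset V E (f a) (f ((a + 1) mod n))) = card V - 1" if "a < n" for a
    using Lset_odd_cycle_edge[OF assms(1) f dist_eq_cycle_dist_if_cycle[OF f adj] that]
      fV antipode_less that finite_V by simp
  have "card (Lset V E u v) = card V - 1" if e: "E u v" for u v
  proof -
    obtain i j where ij: "i < n" "j < n" "u = f i" "v = f j"
      using f edge_in_V[OF e] by (auto simp: bij_betw_def)
    then have "j = (i + 1) mod n \<or> i = (j + 1) mod n" using adj e by blast
    then show ?thesis using edge_card ij Lset_commute by metis
  qed
  moreover have "E (f 0) (f 1)" using adj \<open>3 \<le> n\<close> by simp
  ultimately show ?thesis using lG_eq_if_card_Lset_const by metis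
qed

end

theorem theorem2p11:
  fixes V :: "'a set" and E :: "'a \<Rightarrow> 'a \<Rightarrow> bool"
  assumes "simple_graph V E" and "connected_graph V E" and "\<exists>u v. E u v"
  shows "lG V E = card V - 1 \<longleftrightarrow> (\<exists>n. odd n \<and> iso_to_cycle V E n)"
proof -
  interpret connected_simple_graph V E by unfold_locales (rule assms)+
  obtain u v where "E u v" using assms(3) by blast
  show ?thesis
  proof
    assume lG: "lG V E = card V - 1"
    then obtain a b x where "E a b" "x \<in> V" "dist V E a x = dist V E b x"
      using equidistant_vertex_exists \<open>E u v\<close> by blast
    with equidistant_vertex_unique[OF lG] show "\<exists>n. odd n \<and> iso_to_cycle V E n"
      by (rule odd_cycle_if_unique_equidistant)
  next
    assume "\<exists>n. odd n \<and> iso_to_cycle V E n"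
    then show "lG V E = card V - 1" using lG_odd_cycle by blast
  qed
qed

end
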